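(* In the setting below, assume additionally that $\|\kappa(\xi)\|_{C^1(\bar D)}\le\kappa_{\sup}^*$ for all $\xi\in\Xi$ and some $\kappa_{\sup}^*>0$. Then $$\|\nabla g_\xi(u_1)-\nabla g_\xi(u_2)\|_{L^\infty(D)}\le\ell\Big(C_{H^2;L^\infty}\frac{C_{H^2}(\kappa_{\sup}^* )^3}{(\kappa_{\inf}^*/2)^4}\Big)^2\|u_1-u_2\|_{L^1(D)}$$ for all $u_1,u_2\in\mathcal D(\psi)$ and $\xi\in\Xi$.
   Context: Let $D\subset\mathbb R^d$, $d\in\{1,2,3\}$, be a bounded polyhedral domain, $H^{-1}(D)=H_0^1(D)^*$, $\imath:H_0^1(D)\to L^2(D)$ the compact embedding, $B=\imath^*:L^2(D)\to H^{-1}(D)$ (so $\langle Bu,v\rangle=(u,v)_{L^2}$), $B^*=\imath$. Let $\mathfrak l,\mathfrak u\in L^\infty(D)$ with $\mathfrak l\le0\le\mathfrak u$ a.e., $\beta\ge0$, $\psi(u)=\beta\|u\|_{L^1(D)}+I_{[\mathfrak l,\mathfrak u]}(u)$, $\mathcal D(\psi)=[\mathfrak l,\mathfrak u]=\{v\in L^2(D):\mathfrak l\le v\le\mathfrak u\text{ a.e.}\}$. Let $\Xi$ be a complete separable metric space and $\boldsymbol\xi$ a $\Xi$-valued random element. Assume: $J:L^2(D)\to[0,\infty)$ is convex and continuously differentiable with $\ell$-Lipschitz gradient, and $J(v)\le\varrho(\|v\|_{L^2})$ with $\varrho$ a nondecreasing polynomial; $\kappa:\Xi\to C^1(\bar D)$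 is measurable with all moments $\mathbb E[\|\kappa(\boldsymbol\xi)\|_{C^1(\bar D)}^p]$ finite and $\kappa(\xi)(x)\ge\kappa_{\inf}^*>0$. For $\kappa\in C^1(\bar D)$, $\kappa>\kappa_{\inf}^*/2$, and $w\in H^{-1}(D)$ let $y(\kappa,w)\in H_0^1(D)$ solve $(\kappa\nabla y,\nabla v)_{L^2(D)^d}=\langle w,v\rangle$ for all $v\in H_0^1(D)$; let $C_{H^2}>0$ be a constant with $\|y(\kappa,Bu)\|_{H^2(D)}\le C_{H^2}\|\kappa\|_{C^1(\bar D)}^3(\kappa_{\inf}^*/2)^{-4}\|u\|_{L^2(D)}$ for all such $\kappa$ and $u\in L^2(D)$. Let $C_{H^2;L^\infty}$ be the embedding constant of $H^2(D)\hookrightarrow L^\infty(D)$. Set $S(w,\xi)=y(\kappa(\xi),w)$ and $g_\xi(u)=J(B^*S(Bu,\xi))$ for $u\in L^2(D)$; $\nabla g_\xi$ is its $L^2(D)$-gradient. *)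

theory Defs
  imports "HOL-Probability.Probability" "HOL-Computational_Algebra.Polynomial"
begin

definition polyhedral_domain :: "'a::euclidean_space set \<Rightarrow> bool" where
  "polyhedral_domain D \<longleftrightarrow> open D \<and> connected D \<and> bounded D \<and> D \<noteq> {} \<and>
     interior (closure D) = D \<and>
     (\<exists>P. finite P \<and> (\<forall>p\<in>P. polytope p) \<and> closure D = \<Union>P)"

section \<open>Lebesgue spaces on D (functions modulo a.e. equality are represented by functions)\<close>

definition L2 :: "'a::euclidean_space set \<Rightarrow> ('a \<Rightarrow> real) \<Rightarrow> bool" where
  "L2 D f \<longleftrightarrow> f \<in> borel_measurable (lebesgue_on D) \<and>
     integrable (lebesgue_on D) (\<lambda>x. (f x)\<^sup>2)"

definition L2sq :: "'a::euclidean_space set \<Rightarrow> ('a \<Rightarrow> real) \<Rightarrow> real" where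
  "L2sq D f = (LINT x|lebesgue_on D. (f x)\<^sup>2)"

definition L2norm :: "'a::euclidean_space set \<Rightarrow> ('a \<Rightarrow> real) \<Rightarrow> real" where
  "L2norm D f = sqrt (L2sq D f)"

definition L2inner :: "'a::euclidean_space set \<Rightarrow> ('a \<Rightarrow> real) \<Rightarrow> ('a \<Rightarrow> real) \<Rightarrow> real" where
  "L2inner D f g = (LINT x|lebesgue_on D. f x * g x)"

definition L1norm :: "'a::euclidean_space set \<Rightarrow> ('a \<Rightarrow> real) \<Rightarrow> real" where
  "L1norm D f = (LINT x|lebesgue_on D. \<bar>f x\<bar>)"

definition Linfnorm :: "'a::euclidean_space set \<Rightarrow> ('a \<Rightarrow> real) \<Rightarrow> ereal" where
  "Linfnorm D f = esssup (lebesgue_on D) (\<lambda>x. ereal \<bar>f x\<bar>)"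

definition Linf :: "'a::euclidean_space set \<Rightarrow> ('a \<Rightarrow> real) \<Rightarrow> bool" where
  "Linf D f \<longleftrightarrow> f \<in> borel_measurable (lebesgue_on D) \<and> Linfnorm D f < \<infinity>"

definition dpart :: "'a::euclidean_space \<Rightarrow> ('a \<Rightarrow> real) \<Rightarrow> 'a \<Rightarrow> real" where
  "dpart i f x = frechet_derivative f (at x) i"

fun iter_dpart :: "'a::euclidean_space list \<Rightarrow> ('a \<Rightarrow> real) \<Rightarrow> 'a \<Rightarrow> real" where
  "iter_dpart [] f = f"
| "iter_dpart (i # is) f = dpart i (iter_dpart is f)"

definition smooth :: "('a::euclidean_space \<Rightarrow> real) \<Rightarrow> bool" where
  "smooth f \<longleftrightarrow> (\<forall>is. set is \<subseteq> Basis \<longrightarrow>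
      (\<forall>x. iter_dpart is f differentiable (at x)) \<and> continuous_on UNIV (iter_dpart is f))"

definition test_fun :: "'a::euclidean_space set \<Rightarrow> ('a \<Rightarrow> real) \<Rightarrow> bool" where
  "test_fun D \<phi> \<longleftrightarrow> smooth \<phi> \<and> compact (closure {x. \<phi> x \<noteq> 0}) \<and> closure {x. \<phi> x \<noteq> 0} \<subseteq> D"

definition weak_deriv :: "'a::euclidean_space set \<Rightarrow> ('a \<Rightarrow> real) \<Rightarrow> 'a \<Rightarrow> ('a \<Rightarrow> real) \<Rightarrow> bool" where
  "weak_deriv D u i v \<longleftrightarrow> (\<forall>\<phi>. test_fun D \<phi> \<longrightarrow>
      (LINT x|lebesgue_on D. u x * dpart i \<phi> x) = - (LINT x|lebesgue_on D. v x * \<phi> x))"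

definition wgrad :: "'a::euclidean_space set \<Rightarrow> ('a \<Rightarrow> real) \<Rightarrow> ('a \<Rightarrow> 'a \<Rightarrow> real) \<Rightarrow> bool" where
  "wgrad D u g \<longleftrightarrow> (\<forall>i\<in>Basis. L2 D (g i) \<and> weak_deriv D u i (g i))"

definition H01 :: "'a::euclidean_space set \<Rightarrow> ('a \<Rightarrow> real) \<Rightarrow> bool" where
  "H01 D u \<longleftrightarrow> L2 D u \<and> (\<exists>g. wgrad D u g \<and>
      (\<forall>\<epsilon>>0. \<exists>\<phi>. test_fun D \<phi> \<and>
         L2sq D (\<lambda>x. u x - \<phi> x) + (\<Sum>i\<in>Basis. L2sq D (\<lambda>x. g i x - dpart i \<phi> x)) < \<epsilon>))"

text \<open>g, h are first and second weak derivatives of y in L2, so y is in H^2(D);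
  the H^2 norm computed from these (a.e. unique) derivatives.\<close>
definition H2wit :: "'a::euclidean_space set \<Rightarrow> ('a \<Rightarrow> real) \<Rightarrow> ('a \<Rightarrow> 'a \<Rightarrow> real)
    \<Rightarrow> ('a \<Rightarrow> 'a \<Rightarrow> 'a \<Rightarrow> real) \<Rightarrow> bool" where
  "H2wit D y g h \<longleftrightarrow> L2 D y \<and> wgrad D y g \<and> (\<forall>i\<in>Basis. wgrad D (g i) (h i))"

definition H2norm_wit :: "'a::euclidean_space set \<Rightarrow> ('a \<Rightarrow> real) \<Rightarrow> ('a \<Rightarrow> 'a \<Rightarrow> real)
    \<Rightarrow> ('a \<Rightarrow> 'a \<Rightarrow> 'a \<Rightarrow> real) \<Rightarrow> real" where
  "H2norm_wit D y g h = sqrt (L2sq D y + (\<Sum>i\<in>Basis. L2sq D (g i))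
      + (\<Sum>i\<in>Basis. \<Sum>j\<in>Basis. L2sq D (h i j)))"

definition C1cl :: "'a::euclidean_space set \<Rightarrow> ('a \<Rightarrow> real) \<Rightarrow> bool" where
  "C1cl D f \<longleftrightarrow> continuous_on (closure D) f \<and> (\<forall>x\<in>D. f differentiable (at x)) \<and>
     (\<forall>i\<in>Basis. \<exists>g. continuous_on (closure D) g \<and> (\<forall>x\<in>D. dpart i f x = g x))"

definition C1norm :: "'a::euclidean_space set \<Rightarrow> ('a \<Rightarrow> real) \<Rightarrow> real" where
  "C1norm D f = (SUP x\<in>closure D. \<bar>f x\<bar>) + (\<Sum>i\<in>Basis. SUP x\<in>D. \<bar>dpart i f x\<bar>)"

definition C1_open :: "'a::euclidean_space set \<Rightarrow> ('a \<Rightarrow> real) set \<Rightarrow> bool" where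
  "C1_open D U \<longleftrightarrow> U \<subseteq> Collect (C1cl D) \<and>
     (\<forall>f\<in>U. \<exists>r>0. \<forall>g. C1cl D g \<and> C1norm D (\<lambda>x. g x - f x) < r \<longrightarrow> g \<in> U)"

definition C1_borel :: "'a::euclidean_space set \<Rightarrow> ('a \<Rightarrow> real) measure" where
  "C1_borel D = sigma (Collect (C1cl D)) (Collect (C1_open D))"

text \<open>y solves (kappa grad y, grad v) = (u, v) for all v in H_0^1, i.e. y = y(kappa, B u).\<close>
definition solves :: "'a::euclidean_space set \<Rightarrow> ('a \<Rightarrow> real) \<Rightarrow> ('a \<Rightarrow> real) \<Rightarrow> ('a \<Rightarrow> real) \<Rightarrow> bool" where
  "solves D \<kappa> u y \<longleftrightarrow> H01 D y \<and> (\<exists>gy. wgrad D y gy \<and>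
     (\<forall>v gv. H01 D v \<and> wgrad D v gv \<longrightarrow>
        (LINT x|lebesgue_on D. \<kappa> x * (\<Sum>i\<in>Basis. gy i x * gv i x)) = L2inner D u v))"

definition ysol :: "'a::euclidean_space set \<Rightarrow> ('a \<Rightarrow> real) \<Rightarrow> ('a \<Rightarrow> real) \<Rightarrow> ('a \<Rightarrow> real)" where
  "ysol D \<kappa> u = (SOME y. solves D \<kappa> u y)"

definition L2_gradient :: "'a::euclidean_space set \<Rightarrow> (('a \<Rightarrow> real) \<Rightarrow> real) \<Rightarrow> ('a \<Rightarrow> real) \<Rightarrow> ('a \<Rightarrow> real) \<Rightarrow> bool" where
  "L2_gradient D F u G \<longleftrightarrow> L2 D G \<and> (\<forall>\<epsilon>>0. \<exists>\<delta>>0. \<forall>h. L2 D h \<and> L2norm D h < \<delta> \<longrightarrow>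
      \<bar>F (\<lambda>x. u x + h x) - F u - L2inner D G h\<bar> \<le> \<epsilon> * L2norm D h)"

text \<open>g_xi(u) = J(B^* S(B u, xi)).\<close>
definition gfun :: "'a::euclidean_space set \<Rightarrow> (('a \<Rightarrow> real) \<Rightarrow> real) \<Rightarrow> ('b \<Rightarrow> 'a \<Rightarrow> real) \<Rightarrow> 'b
    \<Rightarrow> ('a \<Rightarrow> real) \<Rightarrow> real" where
  "gfun D J \<kappa> \<xi> u = J (ysol D (\<kappa> \<xi>) u)"

end

theory Submission
  imports Defs
begin

(*
  By the chain rule, grad g(u) = S (grad J (S u)) with S z = y(kappa(xi), B z), a linear operator
  that is symmetric on L2. H2-regularity and the embedding of H2 into L-infinity give
  ||S z||_inf <= A ||z||_2 with A = C_{H2;Linf} C_{H2} kappa_sup^3 / (kappa_inf/2)^4; by symmetry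
  ||S z||_2^2 = (z, S (S z)) <= ||z||_1 A ||S z||_2, i.e. ||S z||_2 <= A ||z||_1. Hence
    ||grad g(u1) - grad g(u2)||_inf <= A ||grad J (S u1) - grad J (S u2)||_2
      <= A ell ||S (u1 - u2)||_2 <= ell A^2 ||u1 - u2||_1.
  Existence of the state is not assumed (ysol is a choice). If some datum has no state, the
  data that have one form a proper linear subspace off which g is constant, and then every
  L2-gradient of g vanishes.
*)

section \<open>Square-integrable functions\<close>

lemma abs_mult_le_sum_squares: "\<bar>a * b\<bar> \<le> a\<^sup>2 + (b::real)\<^sup>2"
proof -
  have "0 \<le> (\<bar>a\<bar> - \<bar>b\<bar>)\<^sup>2" by simp
  then have "2 * (\<bar>a\<bar> * \<bar>b\<bar>) \<le> a\<^sup>2 + b\<^sup>2" by (simp add: power2_eq_square algebra_simps)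
  moreover have "0 \<le> \<bar>a\<bar> * \<bar>b\<bar>" by simp
  ultimately show ?thesis unfolding abs_mult by linarith
qed

lemma L2_measurable: "L2 D f \<Longrightarrow> f \<in> borel_measurable (lebesgue_on D)"
  by (simp add: L2_def)

lemma L2_integrable_square: "L2 D f \<Longrightarrow> integrable (lebesgue_on D) (\<lambda>x. (f x)\<^sup>2)"
  by (simp add: L2_def)

lemma L2_integrable_mult:
  assumes "L2 D f" "L2 D g"
  shows "integrable (lebesgue_on D) (\<lambda>x. f x * g x)"
proof (rule Bochner_Integration.integrable_bound)
  show "integrable (lebesgue_on D) (\<lambda>x. (f x)\<^sup>2 + (g x)\<^sup>2)"
    using assms by (simp add: L2_integrable_square)
  show "(\<lambda>x. f x * g x) \<in> borel_measurable (lebesgue_on D)"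
    using assms[THEN L2_measurable] by measurable
  show "AE x in lebesgue_on D. norm (f x * g x) \<le> norm ((f x)\<^sup>2 + (g x)\<^sup>2)"
    using abs_mult_le_sum_squares by simp
qed

lemma L2_lincomb:
  assumes "L2 D f" "L2 D g"
  shows "L2 D (\<lambda>x. a * f x + b * g x)"
proof -
  have "(\<lambda>x. (a * f x + b * g x)\<^sup>2) = (\<lambda>x. a\<^sup>2 * (f x)\<^sup>2 + b\<^sup>2 * (g x)\<^sup>2 + (2 * a * b) * (f x * g x))"
    by (simp add: power2_sum power_mult_distrib algebra_simps)
  moreover have "(\<lambda>x. a * f x + b * g x) \<in> borel_measurable (lebesgue_on D)"
    using assms[THEN L2_measurable] by measurable
  ultimately show ?thesis
    using assms L2_integrable_mult[OF assms] by (simp add: L2_def)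
qed

lemma L2_scale: "L2 D f \<Longrightarrow> L2 D (\<lambda>x. t * f x)"
  using L2_lincomb[of D f f t 0] by simp

lemma L2_add: "L2 D f \<Longrightarrow> L2 D g \<Longrightarrow> L2 D (\<lambda>x. f x + g x)"
  using L2_lincomb[of D f g 1 1] by simp

lemma L2_diff: "L2 D f \<Longrightarrow> L2 D g \<Longrightarrow> L2 D (\<lambda>x. f x - g x)"
  using L2_lincomb[of D f g 1 "-1"] by simp

lemma L2_mult_bounded:
  assumes "L2 D f" "k \<in> borel_measurable (lebesgue_on D)" "\<And>x. x \<in> D \<Longrightarrow> \<bar>k x\<bar> \<le> B"
  shows "L2 D (\<lambda>x. k x * f x)"
  unfolding L2_def
proof
  show "(\<lambda>x. k x * f x) \<in> borel_measurable (lebesgue_on D)"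
    using L2_measurable[OF assms(1)] assms(2) by measurable
  show "integrable (lebesgue_on D) (\<lambda>x. (k x * f x)\<^sup>2)"
  proof (rule Bochner_Integration.integrable_bound)
    show "integrable (lebesgue_on D) (\<lambda>x. B\<^sup>2 * (f x)\<^sup>2)"
      using assms(1) by (simp add: L2_integrable_square)
    show "(\<lambda>x. (k x * f x)\<^sup>2) \<in> borel_measurable (lebesgue_on D)"
      using L2_measurable[OF assms(1)] assms(2) by measurable
    have "(k x * f x)\<^sup>2 \<le> B\<^sup>2 * (f x)\<^sup>2" if "x \<in> D" for x
    proof -
      have "(k x)\<^sup>2 \<le> B\<^sup>2"
        using power_mono[OF assms(3)[OF that] abs_ge_zero, of 2] by simp
      then show ?thesis by (simp add: power_mult_distrib mult_right_mono)
    qed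
    then show "AE x in lebesgue_on D. norm ((k x * f x)\<^sup>2) \<le> norm (B\<^sup>2 * (f x)\<^sup>2)"
      by (intro AE_I2) (simp add: space_restrict_space)
  qed
qed

lemma L2inner_commute: "L2inner D f g = L2inner D g f"
  unfolding L2inner_def by (simp add: mult.commute)

lemma L2inner_lincomb_right:
  assumes "L2 D v" "L2 D f" "L2 D g"
  shows "L2inner D v (\<lambda>x. a * f x + b * g x) = a * L2inner D v f + b * L2inner D v g"
proof -
  have "L2inner D v (\<lambda>x. a * f x + b * g x) = (LINT x|lebesgue_on D. a * (v x * f x) + b * (v x * g x))"
    unfolding L2inner_def by (simp add: algebra_simps)
  then show ?thesis
    unfolding L2inner_def using L2_integrable_mult[OF assms(1,2)] L2_integrable_mult[OF assms(1,3)] by simp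
qed

lemma L2inner_lincomb_left:
  assumes "L2 D f" "L2 D g" "L2 D v"
  shows "L2inner D (\<lambda>x. a * f x + b * g x) v = a * L2inner D f v + b * L2inner D g v"
  using L2inner_lincomb_right[OF assms(3,1,2)] by (simp add: L2inner_commute)

lemma L2inner_scale_right: "L2inner D g (\<lambda>x. t * f x) = t * L2inner D g f"
  unfolding L2inner_def by (simp add: mult.left_commute)

lemma L2sq_eq_L2inner: "L2sq D f = L2inner D f f"
  unfolding L2sq_def L2inner_def by (simp add: power2_eq_square)

lemma L2sq_nonneg: "0 \<le> L2sq D f"
  unfolding L2sq_def by (simp add: integral_nonneg_AE)

lemma L2norm_nonneg: "0 \<le> L2norm D f"
  unfolding L2norm_def by (simp add: L2sq_nonneg)

lemma L2norm_square: "(L2norm D f)\<^sup>2 = L2sq D f"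
  unfolding L2norm_def using L2sq_nonneg by simp

lemma L2norm_scale: "L2norm D (\<lambda>x. t * f x) = \<bar>t\<bar> * L2norm D f"
  unfolding L2norm_def L2sq_def by (simp add: power_mult_distrib real_sqrt_mult)

lemma L2sq_lincomb_le:
  assumes "L2 D f" "L2 D g"
  shows "L2sq D (\<lambda>x. a * f x + b * g x) \<le> 2 * a\<^sup>2 * L2sq D f + 2 * b\<^sup>2 * L2sq D g"
proof -
  have "(a * f x + b * g x)\<^sup>2 \<le> 2 * a\<^sup>2 * (f x)\<^sup>2 + 2 * b\<^sup>2 * (g x)\<^sup>2" for x
  proof -
    have "0 \<le> (a * f x - b * g x)\<^sup>2" by simp
    then show ?thesis by (simp add: power2_eq_square algebra_simps)
  qed
  then have "L2sq D (\<lambda>x. a * f x + b * g x) \<le> (LINT x|lebesgue_on D. 2 * a\<^sup>2 * (f x)\<^sup>2 + 2 * b\<^sup>2 * (g x)\<^sup>2)"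
    unfolding L2sq_def using assms L2_lincomb[OF assms]
    by (intro integral_mono) (simp_all add: L2_integrable_square)
  then show ?thesis
    unfolding L2sq_def using assms by (simp add: L2_integrable_square)
qed

lemma AE_eq_0_if_L2inner_self_eq_0:
  assumes "L2 D f" "L2inner D f f = 0"
  shows "AE x in lebesgue_on D. f x = 0"
proof -
  have "AE x in lebesgue_on D. (f x)\<^sup>2 = 0"
    using assms integral_nonneg_eq_0_iff_AE[OF L2_integrable_square[OF assms(1)]]
    by (simp add: L2sq_def flip: L2sq_eq_L2inner)
  then show ?thesis by simp
qed

lemma L2norm_cong_AE:
  assumes "L2 D f" "L2 D g" "AE x in lebesgue_on D. f x = g x"
  shows "L2norm D f = L2norm D g"
proof -
  have [measurable]: "f \<in> borel_measurable (lebesgue_on D)" "g \<in> borel_measurable (lebesgue_on D)"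
    using assms by (simp_all add: L2_measurable)
  show ?thesis
    unfolding L2norm_def L2sq_def using assms(3) by (auto intro!: integral_cong_AE elim!: AE_mp)
qed

lemma L1norm_nonneg: "0 \<le> L1norm D f"
  unfolding L1norm_def by (simp add: integral_nonneg_AE)

lemma AE_abs_le_if_Linfnorm_le:
  assumes "Linfnorm D f \<le> ereal r"
  shows "AE x in lebesgue_on D. \<bar>f x\<bar> \<le> r"
proof -
  have "AE x in lebesgue_on D. ereal \<bar>f x\<bar> \<le> Linfnorm D f"
    unfolding Linfnorm_def by (rule esssup_AE)
  then show ?thesis
    by eventually_elim (metis assms ereal_less_eq(3) order_trans)
qed

lemma Linfnorm_cong_AE:
  assumes "f \<in> borel_measurable (lebesgue_on D)" "g \<in> borel_measurable (lebesgue_on D)"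
    and "AE x in lebesgue_on D. f x = g x"
  shows "Linfnorm D f = Linfnorm D g"
  unfolding Linfnorm_def using assms by (intro esssup_AE_cong) (auto elim!: AE_mp)

lemma Linfnorm_le_0_if_AE_eq_0:
  assumes "f \<in> borel_measurable (lebesgue_on D)" "AE x in lebesgue_on D. f x = 0"
  shows "Linfnorm D f \<le> 0"
  unfolding Linfnorm_def using assms by (intro esssup_I) (auto elim!: AE_mp)

lemma L2norm_le_H2norm_wit: "L2norm D y \<le> H2norm_wit D y g h"
proof -
  have "0 \<le> (\<Sum>i\<in>Basis. L2sq D (g i)) + (\<Sum>i\<in>Basis. \<Sum>j\<in>Basis. L2sq D (h i j))"
    by (intro add_nonneg_nonneg sum_nonneg L2sq_nonneg)
  then show ?thesis
    unfolding L2norm_def H2norm_wit_def by (simp add: add.assoc)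
qed

section \<open>Gradients in L2\<close>

lemma L2_gradient_L2: "L2_gradient D F u G \<Longrightarrow> L2 D G"
  by (simp add: L2_gradient_def)

lemma L2_gradient_directional_derivative:
  assumes grad: "L2_gradient D F u G" and d: "L2 D d"
  shows "((\<lambda>t. (F (\<lambda>x. u x + t * d x) - F u) / t) \<longlongrightarrow> L2inner D G d) (at 0)"
proof (rule LIM_I)
  fix r :: real
  assume "0 < r"
  define N where "N = L2norm D d + 1"
  have N: "0 < N" "L2norm D d < N"
    by (simp_all add: N_def add_nonneg_pos L2norm_nonneg)
  have "0 < r / (2 * N)"
    using \<open>0 < r\<close> N by simp
  then obtain \<delta> where "\<delta> > 0" and \<delta>: "\<And>h. L2 D h \<Longrightarrow> L2norm D h < \<delta> \<Longrightarrow>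
      \<bar>F (\<lambda>x. u x + h x) - F u - L2inner D G h\<bar> \<le> r / (2 * N) * L2norm D h"
    using grad unfolding L2_gradient_def by blast
  show "\<exists>s>0. \<forall>t. t \<noteq> 0 \<and> norm (t - 0) < s \<longrightarrow>
      norm ((F (\<lambda>x. u x + t * d x) - F u) / t - L2inner D G d) < r"
  proof (intro exI conjI allI impI)
    show "0 < \<delta> / N" using \<open>\<delta> > 0\<close> N by simp
    fix t :: real
    assume t: "t \<noteq> 0 \<and> norm (t - 0) < \<delta> / N"
    have "L2norm D (\<lambda>x. t * d x) = \<bar>t\<bar> * L2norm D d" by (rule L2norm_scale)
    also have "\<dots> \<le> \<bar>t\<bar> * N" using N by (simp add: mult_left_mono)
    also have "\<dots> < \<delta>" using t N by (simp add: pos_less_divide_eq)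
    finally have "\<bar>F (\<lambda>x. u x + t * d x) - F u - t * L2inner D G d\<bar> \<le> r / (2 * N) * (\<bar>t\<bar> * L2norm D d)"
      using \<delta>[OF L2_scale[OF d]] by (simp add: L2inner_scale_right L2norm_scale)
    also have "\<dots> < r * \<bar>t\<bar>"
      using N t \<open>0 < r\<close> by (simp add: field_simps mult_strict_left_mono)
    finally show "norm ((F (\<lambda>x. u x + t * d x) - F u) / t - L2inner D G d) < r"
      using t by (simp add: field_simps abs_divide)
  qed
qed

lemma L2_gradient_orthogonal_if_eventually_const_on_line:
  assumes grad: "L2_gradient D F u G" and d: "L2 D d"
    and const: "\<forall>\<^sub>F t in at 0. F (\<lambda>x. u x + t * d x) = c"
  shows "L2inner D G d = 0"
proof -
  let ?q = "\<lambda>t. (F (\<lambda>x. u x + t * d x) - F u) / t"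
  have q: "(?q \<longlongrightarrow> L2inner D G d) (at 0)"
    by (rule L2_gradient_directional_derivative[OF grad d])
  have "((\<lambda>t. F u + t * ?q t) \<longlongrightarrow> F u + 0 * L2inner D G d) (at 0)"
    by (intro tendsto_intros q)
  moreover have "\<forall>\<^sub>F t in at 0. F u + t * ?q t = F (\<lambda>x. u x + t * d x)"
    using eventually_neq_at_within[of 0 0 UNIV] by eventually_elim simp
  ultimately have "((\<lambda>t. F (\<lambda>x. u x + t * d x)) \<longlongrightarrow> F u) (at 0)"
    by (simp add: Lim_transform_eventually)
  moreover have "((\<lambda>t. F (\<lambda>x. u x + t * d x)) \<longlongrightarrow> c) (at 0)"
    using const by (rule tendsto_eventually)
  ultimately have "F u = c"
    by (rule LIM_unique)
  then have "(?q \<longlongrightarrow> 0) (at 0)"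
    using const by (intro tendsto_eventually) (auto elim: eventually_mono)
  with q show ?thesis
    by (rule LIM_unique)
qed

lemma L2_gradient_unique_AE:
  assumes "L2_gradient D F u G1" "L2_gradient D F u G2"
  shows "AE x in lebesgue_on D. G1 x = G2 x"
proof -
  have L2: "L2 D G1" "L2 D G2" "L2 D (\<lambda>x. G1 x - G2 x)"
    using assms by (simp_all add: L2_gradient_L2 L2_diff)
  have "L2inner D G1 (\<lambda>x. G1 x - G2 x) = L2inner D G2 (\<lambda>x. G1 x - G2 x)"
    using assms[THEN L2_gradient_directional_derivative, OF L2(3)] by (rule LIM_unique)
  then have "L2inner D (\<lambda>x. G1 x - G2 x) (\<lambda>x. G1 x - G2 x) = 0"
    using L2inner_lincomb_left[OF L2, of 1 "-1"] by simp
  then show ?thesis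
    using AE_eq_0_if_L2inner_self_eq_0[OF L2(3)] by simp
qed

lemma line_meets_subspace_at_most_once:
  fixes u d :: "'a \<Rightarrow> real" and s t :: real
  assumes P_lincomb: "\<And>f g a b. P f \<Longrightarrow> P g \<Longrightarrow> P (\<lambda>x. a * f x + b * g x)"
    and "P (\<lambda>x. u x + s * d x)" "P (\<lambda>x. u x + t * d x)" "\<not> P u \<or> \<not> P d"
  shows "s = t"
proof (rule ccontr)
  assume "s \<noteq> t"
  then have "t - s \<noteq> 0" by simp
  then have "(\<lambda>x. t / (t - s) * (u x + s * d x) + - s / (t - s) * (u x + t * d x)) = u"
    and "(\<lambda>x. 1 / (t - s) * (u x + t * d x) + - 1 / (t - s) * (u x + s * d x)) = d"
    by (auto intro!: ext simp: divide_simps) (simp_all add: algebra_simps)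
  then show False
    using assms by metis
qed

lemma L2_gradient_eq_0_if_const_off_subspace:
  fixes P :: "('a::euclidean_space \<Rightarrow> real) \<Rightarrow> bool"
  assumes P_lincomb: "\<And>f g a b. P f \<Longrightarrow> P g \<Longrightarrow> P (\<lambda>x. a * f x + b * g x)"
    and v: "L2 D v" "\<not> P v"
    and F_const: "\<And>f. L2 D f \<Longrightarrow> \<not> P f \<Longrightarrow> F f = c"
    and u: "L2 D u" and grad: "L2_gradient D F u G"
  shows "AE x in lebesgue_on D. G x = 0"
proof -
  have orthogonal: "L2inner D G d = 0" if d: "L2 D d" and off: "\<not> P u \<or> \<not> P d" for d
  proof (rule L2_gradient_orthogonal_if_eventually_const_on_line[OF grad d])
    have "\<forall>\<^sub>F t in at 0. \<not> P (\<lambda>x. u x + t * d x)"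
    proof (cases "\<exists>t\<^sub>0. P (\<lambda>x. u x + t\<^sub>0 * d x)")
      case True
      then obtain t\<^sub>0 where t\<^sub>0: "P (\<lambda>x. u x + t\<^sub>0 * d x)" by blast
      show ?thesis
        using eventually_neq_at_within[of t\<^sub>0 0 UNIV]
        by eventually_elim (use line_meets_subspace_at_most_once[OF P_lincomb _ t\<^sub>0 off] in blast)
    qed (simp add: always_eventually)
    then show "\<forall>\<^sub>F t in at 0. F (\<lambda>x. u x + t * d x) = c"
      by eventually_elim (simp add: F_const L2_add L2_scale u d)
  qed
  have G: "L2 D G" using grad by (rule L2_gradient_L2)
  have "L2inner D G G = 0"
  proof (cases "P u \<and> P G")
    case True
    have "\<not> P (\<lambda>x. G x + v x)"
    proof
      assume "P (\<lambda>x. G x + v x)"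
      then have "P (\<lambda>x. 1 * (G x + v x) + - 1 * G x)"
        using P_lincomb True by blast
      with v show False by simp
    qed
    then have "L2inner D G (\<lambda>x. G x + v x) = 0" "L2inner D G v = 0"
      using orthogonal G v L2_add by auto
    then show ?thesis
      using L2inner_lincomb_right[OF G G v(1), of 1 1] by simp
  qed (use orthogonal G in blast)
  then show ?thesis
    by (rule AE_eq_0_if_L2inner_self_eq_0[OF G])
qed

section \<open>Test functions and H01 on a bounded domain\<close>

lemma frechet_derivative_lincomb:
  fixes f g :: "'a::euclidean_space \<Rightarrow> real"
  assumes "f differentiable (at x)" "g differentiable (at x)"
  shows "frechet_derivative (\<lambda>x. a * f x + b * g x) (at x) =
    (\<lambda>h. a * frechet_derivative f (at x) h + b * frechet_derivative g (at x) h)"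
proof -
  have "((\<lambda>x. a * f x + b * g x) has_derivative
      (\<lambda>h. a * frechet_derivative f (at x) h + b * frechet_derivative g (at x) h)) (at x)"
    using assms[THEN frechet_derivative_works[THEN iffD1]]
    by (intro has_derivative_add has_derivative_mult_right)
  then show ?thesis
    by (rule frechet_derivative_at[symmetric])
qed

lemma iter_dpart_lincomb:
  assumes "smooth \<phi>" "smooth \<psi>" "set is \<subseteq> Basis"
  shows "iter_dpart is (\<lambda>x. a * \<phi> x + b * \<psi> x) =
    (\<lambda>x. a * iter_dpart is \<phi> x + b * iter_dpart is \<psi> x)"
  using assms(3)
proof (induction "is")
  case (Cons i "is")
  then have "\<And>x. iter_dpart is \<phi> differentiable (at x)" "\<And>x. iter_dpart is \<psi> differentiable (at x)"
    using assms(1,2) unfolding smooth_def by auto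
  with Cons show ?case
    by (auto intro!: ext simp: dpart_def frechet_derivative_lincomb)
qed simp

lemma smooth_lincomb:
  assumes "smooth \<phi>" "smooth \<psi>"
  shows "smooth (\<lambda>x. a * \<phi> x + b * \<psi> x)"
  unfolding smooth_def
proof (intro allI impI conjI)
  fix "is" :: "'a list" and x :: 'a
  assume "is": "set is \<subseteq> Basis"
  then have "\<And>x. iter_dpart is \<phi> differentiable (at x)" "\<And>x. iter_dpart is \<psi> differentiable (at x)"
    and "continuous_on UNIV (iter_dpart is \<phi>)" "continuous_on UNIV (iter_dpart is \<psi>)"
    using assms unfolding smooth_def by blast+
  then show "iter_dpart is (\<lambda>x. a * \<phi> x + b * \<psi> x) differentiable (at x)"
    and "continuous_on UNIV (iter_dpart is (\<lambda>x. a * \<phi> x + b * \<psi> x))"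
    unfolding iter_dpart_lincomb[OF assms "is"]
    by (intro differentiable_add differentiable_mult differentiable_const continuous_intros; simp)+
qed

lemma dpart_lincomb:
  assumes "smooth \<phi>" "smooth \<psi>" "i \<in> Basis"
  shows "dpart i (\<lambda>x. a * \<phi> x + b * \<psi> x) = (\<lambda>x. a * dpart i \<phi> x + b * dpart i \<psi> x)"
  using iter_dpart_lincomb[OF assms(1,2), of "[i]"] assms(3) by simp

lemma test_fun_lincomb:
  assumes "test_fun D \<phi>" "test_fun D \<psi>"
  shows "test_fun D (\<lambda>x. a * \<phi> x + b * \<psi> x)"
proof -
  have supp: "{x. a * \<phi> x + b * \<psi> x \<noteq> 0} \<subseteq> {x. \<phi> x \<noteq> 0} \<union> {x. \<psi> x \<noteq> 0}"
    by auto
  then have "closure {x. a * \<phi> x + b * \<psi> x \<noteq> 0}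
      \<subseteq> closure {x. \<phi> x \<noteq> 0} \<union> closure {x. \<psi> x \<noteq> 0}"
    using closure_mono[OF supp] by (simp add: closure_Un)
  moreover have "bounded ({x. \<phi> x \<noteq> 0} \<union> {x. \<psi> x \<noteq> 0})"
    using assms unfolding test_fun_def compact_closure by simp
  then have "bounded {x. a * \<phi> x + b * \<psi> x \<noteq> 0}"
    using supp by (rule bounded_subset)
  ultimately show ?thesis
    using assms smooth_lincomb unfolding test_fun_def compact_closure by blast
qed

lemma smooth_continuous: "smooth \<phi> \<Longrightarrow> set is \<subseteq> Basis \<Longrightarrow> continuous_on UNIV (iter_dpart is \<phi>)"
  by (simp add: smooth_def)

lemma test_fun_continuous: "test_fun D \<phi> \<Longrightarrow> continuous_on UNIV \<phi>"
  using smooth_continuous[of \<phi> "[]"] by (simp add: test_fun_def)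

lemma test_fun_dpart_continuous: "test_fun D \<phi> \<Longrightarrow> i \<in> Basis \<Longrightarrow> continuous_on UNIV (dpart i \<phi>)"
  using smooth_continuous[of \<phi> "[i]"] by (simp add: test_fun_def)

definition H1_sq_dist ::
    "'a::euclidean_space set \<Rightarrow> ('a \<Rightarrow> real) \<Rightarrow> ('a \<Rightarrow> 'a \<Rightarrow> real) \<Rightarrow> ('a \<Rightarrow> real) \<Rightarrow> real" where
  "H1_sq_dist D u g \<phi> = L2sq D (\<lambda>x. u x - \<phi> x) + (\<Sum>i\<in>Basis. L2sq D (\<lambda>x. g i x - dpart i \<phi> x))"

locale bounded_lebesgue_set =
  fixes D :: "'a::euclidean_space set"
  assumes D_lebesgue: "D \<in> sets lebesgue" and D_bounded: "bounded D"
begin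

lemma finite_measure: "finite_measure (lebesgue_on D)"
  using D_bounded D_lebesgue by (simp add: bounded_set_imp_lmeasurable finite_measure_lebesgue_on)

lemma L2_if_bounded:
  assumes "f \<in> borel_measurable (lebesgue_on D)" "\<And>x. x \<in> D \<Longrightarrow> \<bar>f x\<bar> \<le> B"
  shows "L2 D f"
proof -
  have "L2 D (\<lambda>x. 1)"
    unfolding L2_def using finite_measure by (simp add: finite_measure.integrable_const)
  then show ?thesis
    using L2_mult_bounded[of D "\<lambda>x. 1" f B] assms by simp
qed

lemma integrable_if_L2:
  assumes "L2 D f"
  shows "integrable (lebesgue_on D) f"
proof -
  have "L2 D (\<lambda>x. 1)"
    using L2_if_bounded[of "\<lambda>x. 1" 1] by simp
  then show ?thesis
    using L2_integrable_mult[OF assms] by fastforce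
qed

lemma continuous_on_closure_measurable_bounded:
  fixes f :: "'a \<Rightarrow> real"
  assumes "continuous_on (closure D) f"
  shows "f \<in> borel_measurable (lebesgue_on D)" and "bounded (f ` D)"
proof -
  show "f \<in> borel_measurable (lebesgue_on D)"
    using continuous_on_subset[OF assms closure_subset] D_lebesgue
    by (rule continuous_imp_measurable_on_sets_lebesgue)
  have "compact (f ` closure D)"
    using assms D_bounded by (simp add: compact_continuous_image)
  then show "bounded (f ` D)"
    by (meson bounded_subset closure_subset compact_imp_bounded image_mono)
qed

lemma L2_if_continuous_on_closure:
  assumes "continuous_on (closure D) f"
  shows "L2 D f"
proof -
  obtain B where "\<And>x. x \<in> D \<Longrightarrow> \<bar>f x\<bar> \<le> B"
    using continuous_on_closure_measurable_bounded(2)[OF assms] by (auto simp: bounded_iff)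
  then show ?thesis
    using L2_if_bounded continuous_on_closure_measurable_bounded(1)[OF assms] by blast
qed

lemma test_fun_L2: "test_fun D \<phi> \<Longrightarrow> L2 D \<phi>"
  using test_fun_continuous continuous_on_subset L2_if_continuous_on_closure by blast

lemma test_fun_dpart_L2: "test_fun D \<phi> \<Longrightarrow> i \<in> Basis \<Longrightarrow> L2 D (dpart i \<phi>)"
  using test_fun_dpart_continuous continuous_on_subset L2_if_continuous_on_closure by blast

lemma weak_deriv_lincomb:
  assumes "L2 D u" "L2 D w" "L2 D v" "L2 D z" "weak_deriv D u i v" "weak_deriv D w i z" "i \<in> Basis"
  shows "weak_deriv D (\<lambda>x. a * u x + b * w x) i (\<lambda>x. a * v x + b * z x)"
  unfolding weak_deriv_def L2inner_def[symmetric]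
proof (intro allI impI)
  fix \<phi>
  assume \<phi>: "test_fun D \<phi>"
  then have "L2inner D u (dpart i \<phi>) = - L2inner D v \<phi>" "L2inner D w (dpart i \<phi>) = - L2inner D z \<phi>"
    using assms(5,6) unfolding weak_deriv_def L2inner_def by blast+
  then show "L2inner D (\<lambda>x. a * u x + b * w x) (dpart i \<phi>) = - L2inner D (\<lambda>x. a * v x + b * z x) \<phi>"
    using assms(1-4) test_fun_dpart_L2[OF \<phi> assms(7)] test_fun_L2[OF \<phi>]
    by (simp add: L2inner_lincomb_left)
qed

lemma wgrad_lincomb:
  assumes "L2 D u" "L2 D w" "wgrad D u g" "wgrad D w h"
  shows "wgrad D (\<lambda>x. a * u x + b * w x) (\<lambda>i x. a * g i x + b * h i x)"
  using assms unfolding wgrad_def by (simp add: L2_lincomb weak_deriv_lincomb)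

lemma H1_sq_dist_lincomb_le:
  assumes "wgrad D u g" "wgrad D w h" "L2 D u" "L2 D w" "test_fun D \<phi>" "test_fun D \<psi>"
  shows "H1_sq_dist D (\<lambda>x. a * u x + b * w x) (\<lambda>i x. a * g i x + b * h i x) (\<lambda>x. a * \<phi> x + b * \<psi> x)
    \<le> 2 * a\<^sup>2 * H1_sq_dist D u g \<phi> + 2 * b\<^sup>2 * H1_sq_dist D w h \<psi>"
proof -
  have smooth: "smooth \<phi>" "smooth \<psi>"
    using assms(5,6) by (simp_all add: test_fun_def)
  have "L2sq D (\<lambda>x. a * u x + b * w x - (a * \<phi> x + b * \<psi> x))
      \<le> 2 * a\<^sup>2 * L2sq D (\<lambda>x. u x - \<phi> x) + 2 * b\<^sup>2 * L2sq D (\<lambda>x. w x - \<psi> x)"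
    using L2sq_lincomb_le[of D "\<lambda>x. u x - \<phi> x" "\<lambda>x. w x - \<psi> x" a b] assms(3-6)
    by (simp add: L2_diff test_fun_L2 algebra_simps)
  moreover have "(\<Sum>i\<in>Basis. L2sq D (\<lambda>x. a * g i x + b * h i x - dpart i (\<lambda>x. a * \<phi> x + b * \<psi> x) x))
      \<le> (\<Sum>i\<in>Basis. 2 * a\<^sup>2 * L2sq D (\<lambda>x. g i x - dpart i \<phi> x)
        + 2 * b\<^sup>2 * L2sq D (\<lambda>x. h i x - dpart i \<psi> x))"
  proof (rule sum_mono)
    fix i :: 'a
    assume i: "i \<in> Basis"
    show "L2sq D (\<lambda>x. a * g i x + b * h i x - dpart i (\<lambda>x. a * \<phi> x + b * \<psi> x) x)
      \<le> 2 * a\<^sup>2 * L2sq D (\<lambda>x. g i x - dpart i \<phi> x) + 2 * b\<^sup>2 * L2sq D (\<lambda>x. h i x - dpart i \<psi> x)"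
      using L2sq_lincomb_le[of D "\<lambda>x. g i x - dpart i \<phi> x" "\<lambda>x. h i x - dpart i \<psi> x" a b]
        assms(1,2,5,6) i
      by (simp add: dpart_lincomb[OF smooth i] L2_diff test_fun_dpart_L2 wgrad_def algebra_simps)
  qed
  ultimately show ?thesis
    unfolding H1_sq_dist_def by (simp add: sum.distrib sum_distrib_left algebra_simps)
qed

lemma H01_iff:
  "H01 D u \<longleftrightarrow>
    L2 D u \<and> (\<exists>g. wgrad D u g \<and> (\<forall>\<epsilon>>0. \<exists>\<phi>. test_fun D \<phi> \<and> H1_sq_dist D u g \<phi> < \<epsilon>))"
  unfolding H01_def H1_sq_dist_def ..

lemma H01_lincomb:
  assumes "H01 D u" "H01 D w"
  shows "H01 D (\<lambda>x. a * u x + b * w x)"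
proof -
  obtain g h where u: "L2 D u" "wgrad D u g" "\<forall>\<epsilon>>0. \<exists>\<phi>. test_fun D \<phi> \<and> H1_sq_dist D u g \<phi> < \<epsilon>"
    and w: "L2 D w" "wgrad D w h" "\<forall>\<epsilon>>0. \<exists>\<psi>. test_fun D \<psi> \<and> H1_sq_dist D w h \<psi> < \<epsilon>"
    using assms unfolding H01_iff by blast
  have "\<exists>\<theta>. test_fun D \<theta> \<and> H1_sq_dist D (\<lambda>x. a * u x + b * w x) (\<lambda>i x. a * g i x + b * h i x) \<theta> < \<epsilon>"
    if "\<epsilon> > 0" for \<epsilon>
  proof -
    define c where "c = 2 * a\<^sup>2 + 2 * b\<^sup>2 + 1"
    have "c > 0" by (simp add: c_def add_nonneg_pos)
    with \<open>\<epsilon> > 0\<close> obtain \<phi> \<psi> where \<phi>: "test_fun D \<phi>" "H1_sq_dist D u g \<phi> < \<epsilon> / c"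
      and \<psi>: "test_fun D \<psi>" "H1_sq_dist D w h \<psi> < \<epsilon> / c"
      using u(3) w(3) by (meson divide_pos_pos)
    have "H1_sq_dist D (\<lambda>x. a * u x + b * w x) (\<lambda>i x. a * g i x + b * h i x) (\<lambda>x. a * \<phi> x + b * \<psi> x)
        \<le> 2 * a\<^sup>2 * H1_sq_dist D u g \<phi> + 2 * b\<^sup>2 * H1_sq_dist D w h \<psi>"
      using u w \<phi>(1) \<psi>(1) by (intro H1_sq_dist_lincomb_le)
    also have "\<dots> \<le> 2 * a\<^sup>2 * (\<epsilon> / c) + 2 * b\<^sup>2 * (\<epsilon> / c)"
      using \<phi>(2) \<psi>(2) by (intro add_mono mult_left_mono) simp_all
    also have "\<dots> = (c - 1) * (\<epsilon> / c)"
      by (simp only: c_def distrib_right[symmetric]) simp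
    also have "\<dots> < c * (\<epsilon> / c)"
      using \<open>c > 0\<close> \<open>\<epsilon> > 0\<close> by (intro mult_strict_right_mono) simp_all
    also have "\<dots> = \<epsilon>"
      using \<open>c > 0\<close> by simp
    finally show ?thesis
      using test_fun_lincomb[OF \<phi>(1) \<psi>(1)] by blast
  qed
  then show ?thesis
    unfolding H01_iff using u w by (blast intro: L2_lincomb wgrad_lincomb)
qed

lemma L2inner_le_L1norm_mult:
  assumes "L2 D f" "L2 D g" "AE x in lebesgue_on D. \<bar>g x\<bar> \<le> r"
  shows "L2inner D f g \<le> r * L1norm D f"
proof -
  have "L2inner D f g \<le> (LINT x|lebesgue_on D. \<bar>f x\<bar> * r)"
    unfolding L2inner_def
  proof (rule integral_mono_AE)
    show "integrable (lebesgue_on D) (\<lambda>x. f x * g x)"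
      using assms(1,2) by (rule L2_integrable_mult)
    show "integrable (lebesgue_on D) (\<lambda>x. \<bar>f x\<bar> * r)"
      using integrable_if_L2[OF assms(1)] by simp
    show "AE x in lebesgue_on D. f x * g x \<le> \<bar>f x\<bar> * r"
      using assms(3)
    proof eventually_elim
      fix x
      assume "\<bar>g x\<bar> \<le> r"
      have "f x * g x \<le> \<bar>f x\<bar> * \<bar>g x\<bar>"
        using abs_ge_self[of "f x * g x"] by (simp add: abs_mult)
      also have "\<dots> \<le> \<bar>f x\<bar> * r"
        using \<open>\<bar>g x\<bar> \<le> r\<close> by (simp add: mult_left_mono)
      finally show "f x * g x \<le> \<bar>f x\<bar> * r" .
    qed
  qed
  then show ?thesis
    by (simp add: L1norm_def mult.commute)
qed

lemma L2norm_one_pos: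
  assumes "open D" "D \<noteq> {}"
  shows "0 < L2norm D (\<lambda>x. 1)"
proof -
  obtain c r where "r > 0" "ball c r \<subseteq> D"
    using assms open_contains_ball by blast
  have "0 < measure lborel (ball c r)"
    using \<open>r > 0\<close> by (rule content_ball_pos)
  also have "\<dots> = measure lebesgue (ball c r)"
    by simp
  also have "\<dots> \<le> measure lebesgue D"
    using \<open>ball c r \<subseteq> D\<close> bounded_set_imp_lmeasurable[OF D_bounded D_lebesgue]
    by (intro measure_mono_fmeasurable) auto
  also have "\<dots> = L2sq D (\<lambda>x. 1)"
    using D_lebesgue by (simp add: L2sq_def measure_restrict_space)
  finally show ?thesis
    by (simp add: L2norm_def)
qed

lemma lipschitz_constant_nonneg:
  assumes "open D" "D \<noteq> {}"
    and lipschitz: "\<And>v w. L2 D v \<Longrightarrow> L2 D w \<Longrightarrow>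
      L2norm D (\<lambda>x. f v x - f w x) \<le> ell * L2norm D (\<lambda>x. v x - w x)"
  shows "0 \<le> ell"
proof -
  have "L2 D (\<lambda>x. 1)" "L2 D (\<lambda>x. 0)"
    using L2_if_bounded[of "\<lambda>x. 1" 1] L2_if_bounded[of "\<lambda>x. 0" 0] by simp_all
  then have "L2norm D (\<lambda>x. f (\<lambda>x. 1) x - f (\<lambda>x. 0) x) \<le> ell * L2norm D (\<lambda>x. 1 - 0)"
    by (rule lipschitz)
  then have "0 \<le> ell * L2norm D (\<lambda>x. 1)"
    using L2norm_nonneg by (simp add: order_trans[OF L2norm_nonneg])
  with L2norm_one_pos[OF assms(1,2)] show ?thesis
    by (simp add: zero_le_mult_iff)
qed

end

section \<open>The state equation\<close>

locale elliptic_coefficient = bounded_lebesgue_set +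
  fixes k :: "'a::euclidean_space \<Rightarrow> real"
  assumes k_measurable: "k \<in> borel_measurable (lebesgue_on D)" and k_bounded: "bounded (k ` D)"
begin

lemma integrable_energy_form:
  assumes "\<And>i. i \<in> Basis \<Longrightarrow> L2 D (g i)" "\<And>i. i \<in> Basis \<Longrightarrow> L2 D (h i)"
  shows "integrable (lebesgue_on D) (\<lambda>x. k x * (\<Sum>i\<in>Basis. g i x * h i x))"
proof -
  obtain B where B: "\<And>x. x \<in> D \<Longrightarrow> \<bar>k x\<bar> \<le> B"
    using k_bounded by (auto simp: bounded_iff)
  have "L2 D (\<lambda>x. k x * g i x)" if "i \<in> Basis" for i
    using L2_mult_bounded[of D "g i" k B] assms(1)[OF that] k_measurable B by blast
  then have "integrable (lebesgue_on D) (\<lambda>x. \<Sum>i\<in>Basis. (k x * g i x) * h i x)"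
    using assms(2) by (intro Bochner_Integration.integrable_sum L2_integrable_mult) auto
  then show ?thesis
    by (simp add: sum_distrib_left mult.assoc)
qed

lemma solves_L2: "solves D k u y \<Longrightarrow> L2 D y"
  unfolding solves_def H01_def by blast

lemma solves_lincomb:
  assumes u: "L2 D u" "solves D k u y" and w: "L2 D w" "solves D k w z"
  shows "solves D k (\<lambda>x. a * u x + b * w x) (\<lambda>x. a * y x + b * z x)"
proof -
  obtain gy where y: "H01 D y" "wgrad D y gy" and eq_y: "\<And>v gv. H01 D v \<Longrightarrow> wgrad D v gv \<Longrightarrow>
      (LINT x|lebesgue_on D. k x * (\<Sum>i\<in>Basis. gy i x * gv i x)) = L2inner D u v"
    using u(2) unfolding solves_def by blast
  obtain gz where z: "H01 D z" "wgrad D z gz" and eq_z: "\<And>v gv. H01 D v \<Longrightarrow> wgrad D v gv \<Longrightarrow>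
      (LINT x|lebesgue_on D. k x * (\<Sum>i\<in>Basis. gz i x * gv i x)) = L2inner D w v"
    using w(2) unfolding solves_def by blast
  have "(LINT x|lebesgue_on D. k x * (\<Sum>i\<in>Basis. (a * gy i x + b * gz i x) * gv i x))
      = L2inner D (\<lambda>x. a * u x + b * w x) v"
    if v: "H01 D v" "wgrad D v gv" for v gv
  proof -
    have "(\<lambda>x. k x * (\<Sum>i\<in>Basis. (a * gy i x + b * gz i x) * gv i x))
        = (\<lambda>x. a * (k x * (\<Sum>i\<in>Basis. gy i x * gv i x)) + b * (k x * (\<Sum>i\<in>Basis. gz i x * gv i x)))"
      by (simp add: algebra_simps sum.distrib sum_distrib_left)
    moreover have "integrable (lebesgue_on D) (\<lambda>x. k x * (\<Sum>i\<in>Basis. gy i x * gv i x))"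
      and "integrable (lebesgue_on D) (\<lambda>x. k x * (\<Sum>i\<in>Basis. gz i x * gv i x))"
      using y(2) z(2) v(2) by (auto intro!: integrable_energy_form simp: wgrad_def)
    ultimately show ?thesis
      using eq_y[OF v] eq_z[OF v] u(1) w(1) v(1)
      by (simp add: L2inner_lincomb_left H01_def)
  qed
  moreover have "wgrad D (\<lambda>x. a * y x + b * z x) (\<lambda>i x. a * gy i x + b * gz i x)"
    using y z by (intro wgrad_lincomb) (simp_all add: H01_def)
  ultimately show ?thesis
    unfolding solves_def using H01_lincomb[OF y(1) z(1)] by blast
qed

(* Where no solution exists, ysol returns the same junk value SOME y. False. *)

lemma reduced_gradient_eq_0_if_not_solvable:
  assumes "L2 D v" "\<nexists>y. solves D k v y"
    and "L2 D u" "L2_gradient D (\<lambda>v. J (ysol D k v)) u G"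
  shows "AE x in lebesgue_on D. G x = 0"
proof (rule L2_gradient_eq_0_if_const_off_subspace[where P = "\<lambda>f. L2 D f \<and> (\<exists>y. solves D k f y)"])
  fix f g :: "'a \<Rightarrow> real" and a b :: real
  assume "L2 D f \<and> (\<exists>y. solves D k f y)" "L2 D g \<and> (\<exists>y. solves D k g y)"
  then show "L2 D (\<lambda>x. a * f x + b * g x) \<and> (\<exists>y. solves D k (\<lambda>x. a * f x + b * g x) y)"
    using L2_lincomb solves_lincomb by blast
next
  show "J (ysol D k f) = J (SOME y. False)" if "L2 D f" "\<not> (L2 D f \<and> (\<exists>y. solves D k f y))" for f
    using that by (simp add: ysol_def)
qed (use assms in blast)+

end

locale elliptic_estimates = elliptic_coefficient +
  fixes C A :: real
  assumes C_nonneg: "0 \<le> C" and A_nonneg: "0 \<le> A"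
    and L2_estimate: "\<And>u y. L2 D u \<Longrightarrow> solves D k u y \<Longrightarrow> L2norm D y \<le> C * L2norm D u"
    and Linf_estimate: "\<And>u y. L2 D u \<Longrightarrow> solves D k u y \<Longrightarrow> Linfnorm D y \<le> ereal (A * L2norm D u)"
begin

lemma solves_unique_AE:
  assumes "L2 D u" "solves D k u y" "solves D k u z"
  shows "AE x in lebesgue_on D. y x = z x"
proof -
  have "solves D k (\<lambda>x. 0) (\<lambda>x. y x - z x)"
    using solves_lincomb[OF assms(1,2) assms(1,3), of 1 "-1"] by simp
  moreover have "L2 D (\<lambda>x. 0)" "L2norm D (\<lambda>x. 0) = 0"
    using L2_if_bounded[of "\<lambda>x. 0" 0] by (simp_all add: L2norm_def L2sq_def)
  ultimately have "L2norm D (\<lambda>x. y x - z x) \<le> 0"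
    using L2_estimate by fastforce
  then have "L2inner D (\<lambda>x. y x - z x) (\<lambda>x. y x - z x) = 0"
    using L2norm_nonneg[of D "\<lambda>x. y x - z x"] L2norm_square[of D "\<lambda>x. y x - z x"]
    by (simp add: L2sq_eq_L2inner)
  then have "AE x in lebesgue_on D. y x - z x = 0"
    using assms by (intro AE_eq_0_if_L2inner_self_eq_0 L2_diff solves_L2)
  then show ?thesis
    by simp
qed

end

lemma (in elliptic_coefficient) elliptic_estimates_if_H2_bounded:
  assumes "0 \<le> C"
    and H2_bound: "\<And>u y. L2 D u \<Longrightarrow> solves D k u y \<Longrightarrow>
      \<exists>g h. H2wit D y g h \<and> H2norm_wit D y g h \<le> C * L2norm D u"
    and Linf_H2: "\<And>v g h. H2wit D v g h \<Longrightarrow> Linfnorm D v \<le> ereal (c * H2norm_wit D v g h)"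
  shows "elliptic_estimates D k C (\<bar>c\<bar> * C)"
proof unfold_locales
  fix u y
  assume "L2 D u" "solves D k u y"
  then obtain g h where gh: "H2wit D y g h" and bound: "H2norm_wit D y g h \<le> C * L2norm D u"
    using H2_bound by blast
  then show "L2norm D y \<le> C * L2norm D u"
    using L2norm_le_H2norm_wit order_trans by blast
  have "0 \<le> H2norm_wit D y g h"
    using L2norm_nonneg L2norm_le_H2norm_wit by (rule order_trans)
  then have "c * H2norm_wit D y g h \<le> \<bar>c\<bar> * H2norm_wit D y g h"
    by (simp add: mult_right_mono)
  also have "\<dots> \<le> \<bar>c\<bar> * (C * L2norm D u)"
    using bound by (simp add: mult_left_mono)
  finally show "Linfnorm D y \<le> ereal (\<bar>c\<bar> * C * L2norm D u)"
    using Linf_H2[OF gh] by (simp add: mult.assoc order_trans)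
qed (use assms(1) in simp_all)

lemma (in bounded_lebesgue_set) elliptic_estimates_if_C1_coefficient:
  assumes k: "C1cl D k" "\<And>x. x \<in> closure D \<Longrightarrow> \<kappa>\<^sub>0 \<le> k x" "C1norm D k \<le> K"
    and pos: "0 < \<kappa>\<^sub>0" "0 < c\<^sub>0" "0 < K"
    and H2_bound: "\<And>k u y. C1cl D k \<Longrightarrow> (\<forall>x\<in>closure D. k x > \<kappa>\<^sub>0 / 2) \<Longrightarrow> L2 D u \<Longrightarrow>
      solves D k u y \<Longrightarrow>
      \<exists>g h. H2wit D y g h \<and> H2norm_wit D y g h \<le> c\<^sub>0 * C1norm D k ^ 3 / (\<kappa>\<^sub>0 / 2) ^ 4 * L2norm D u"
    and Linf_H2: "\<And>v g h. H2wit D v g h \<Longrightarrow> Linfnorm D v \<le> ereal (c * H2norm_wit D v g h)"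
  shows "elliptic_estimates D k (c\<^sub>0 * K ^ 3 / (\<kappa>\<^sub>0 / 2) ^ 4) (\<bar>c\<bar> * (c\<^sub>0 * K ^ 3 / (\<kappa>\<^sub>0 / 2) ^ 4))"
proof -
  have "continuous_on (closure D) k"
    using k(1) by (simp add: C1cl_def)
  then interpret elliptic_coefficient D k
    by unfold_locales (simp_all add: continuous_on_closure_measurable_bounded)
  have k_half: "\<forall>x\<in>closure D. k x > \<kappa>\<^sub>0 / 2"
    using k(2) pos(1) by (smt (verit) field_sum_of_halves)
  have C_bound: "c\<^sub>0 * C1norm D k ^ 3 / (\<kappa>\<^sub>0 / 2) ^ 4 \<le> c\<^sub>0 * K ^ 3 / (\<kappa>\<^sub>0 / 2) ^ 4"
    using power_mono_odd[OF _ k(3), of 3] pos(2) by (simp add: divide_right_mono)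
  show ?thesis
  proof (rule elliptic_estimates_if_H2_bounded[OF _ _ Linf_H2])
    fix u y
    assume sol: "L2 D u" "solves D k u y"
    obtain g h where "H2wit D y g h"
      and "H2norm_wit D y g h \<le> c\<^sub>0 * C1norm D k ^ 3 / (\<kappa>\<^sub>0 / 2) ^ 4 * L2norm D u"
      using H2_bound[OF k(1) k_half sol] by blast
    moreover have "\<dots> \<le> c\<^sub>0 * K ^ 3 / (\<kappa>\<^sub>0 / 2) ^ 4 * L2norm D u"
      using C_bound by (intro mult_right_mono L2norm_nonneg)
    ultimately show "\<exists>g h. H2wit D y g h \<and> H2norm_wit D y g h \<le> c\<^sub>0 * K ^ 3 / (\<kappa>\<^sub>0 / 2) ^ 4 * L2norm D u"
      by (meson order_trans)
  qed (use pos in simp)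
qed

locale solvable_elliptic = elliptic_estimates +
  assumes solvable: "\<And>u. L2 D u \<Longrightarrow> \<exists>y. solves D k u y"
begin

lemma solves_ysol: "L2 D u \<Longrightarrow> solves D k u (ysol D k u)"
  unfolding ysol_def using solvable by (rule someI_ex)

lemma L2_ysol: "L2 D u \<Longrightarrow> L2 D (ysol D k u)"
  by (rule solves_L2[OF solves_ysol])

lemma ysol_lincomb_AE:
  assumes "L2 D u" "L2 D w"
  shows "AE x in lebesgue_on D. ysol D k (\<lambda>x. a * u x + b * w x) x = a * ysol D k u x + b * ysol D k w x"
  using L2_lincomb[OF assms] solves_ysol[OF L2_lincomb[OF assms]]
    solves_lincomb[OF assms(1) solves_ysol[OF assms(1)] assms(2) solves_ysol[OF assms(2)]]
  by (rule solves_unique_AE)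

lemma ysol_add_AE:
  "L2 D u \<Longrightarrow> L2 D w \<Longrightarrow> AE x in lebesgue_on D. ysol D k (\<lambda>x. u x + w x) x = ysol D k u x + ysol D k w x"
  using ysol_lincomb_AE[of u w 1 1] by simp

lemma ysol_diff_AE:
  "L2 D u \<Longrightarrow> L2 D w \<Longrightarrow> AE x in lebesgue_on D. ysol D k (\<lambda>x. u x - w x) x = ysol D k u x - ysol D k w x"
  using ysol_lincomb_AE[of u w 1 "-1"] by simp

lemma ysol_symmetric:
  assumes "L2 D u" "L2 D w"
  shows "L2inner D u (ysol D k w) = L2inner D w (ysol D k u)"
proof -
  obtain gu where u: "H01 D (ysol D k u)" "wgrad D (ysol D k u) gu" and eq_u: "\<And>v gv. H01 D v \<Longrightarrow> wgrad D v gv \<Longrightarrow>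
      (LINT x|lebesgue_on D. k x * (\<Sum>i\<in>Basis. gu i x * gv i x)) = L2inner D u v"
    using solves_ysol[OF assms(1)] unfolding solves_def by blast
  obtain gw where w: "H01 D (ysol D k w)" "wgrad D (ysol D k w) gw" and eq_w: "\<And>v gv. H01 D v \<Longrightarrow> wgrad D v gv \<Longrightarrow>
      (LINT x|lebesgue_on D. k x * (\<Sum>i\<in>Basis. gw i x * gv i x)) = L2inner D w v"
    using solves_ysol[OF assms(2)] unfolding solves_def by blast
  show ?thesis
    using eq_u[OF w] eq_w[OF u] by (simp add: mult.commute)
qed

lemma ysol_L2norm_le_L1norm:
  assumes z: "L2 D z"
  shows "L2norm D (ysol D k z) \<le> A * L1norm D z"
proof -
  let ?y = "ysol D k z"
  have y: "L2 D ?y" using z by (rule L2_ysol)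
  have "(L2norm D ?y)\<^sup>2 = L2inner D z (ysol D k ?y)"
    using ysol_symmetric[OF z y] by (simp add: L2norm_square L2sq_eq_L2inner)
  also have "\<dots> \<le> A * L2norm D ?y * L1norm D z"
    using Linf_estimate[OF y solves_ysol[OF y]]
    by (intro L2inner_le_L1norm_mult z L2_ysol y AE_abs_le_if_Linfnorm_le)
  finally have le: "L2norm D ?y * L2norm D ?y \<le> L2norm D ?y * (A * L1norm D z)"
    by (simp add: power2_eq_square algebra_simps)
  show ?thesis
  proof (cases "L2norm D ?y = 0")
    case True
    then show ?thesis using A_nonneg L1norm_nonneg[of D z] by simp
  next
    case False
    then have "0 < L2norm D ?y" using L2norm_nonneg[of D ?y] by simp
    then show ?thesis using le by simp
  qed
qed

lemma L2_gradient_comp_ysol: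
  assumes J_ae: "\<And>v w. L2 D v \<Longrightarrow> L2 D w \<Longrightarrow> AE x in lebesgue_on D. v x = w x \<Longrightarrow> J v = J w"
    and u: "L2 D u" and grad: "L2_gradient D J (ysol D k u) G"
  shows "L2_gradient D (\<lambda>v. J (ysol D k v)) u (ysol D k G)"
  unfolding L2_gradient_def
proof (intro conjI allI impI)
  have G: "L2 D G" using grad by (rule L2_gradient_L2)
  then show "L2 D (ysol D k G)" by (rule L2_ysol)
  fix \<epsilon> :: real
  assume "\<epsilon> > 0"
  then have "\<epsilon> / (C + 1) > 0" using C_nonneg by simp
  then obtain \<delta> where "\<delta> > 0" and \<delta>: "\<And>h. L2 D h \<Longrightarrow> L2norm D h < \<delta> \<Longrightarrow>
      \<bar>J (\<lambda>x. ysol D k u x + h x) - J (ysol D k u) - L2inner D G h\<bar> \<le> \<epsilon> / (C + 1) * L2norm D h"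
    using grad unfolding L2_gradient_def by blast
  show "\<exists>\<delta>>0. \<forall>h. L2 D h \<and> L2norm D h < \<delta> \<longrightarrow>
      \<bar>J (ysol D k (\<lambda>x. u x + h x)) - J (ysol D k u) - L2inner D (ysol D k G) h\<bar> \<le> \<epsilon> * L2norm D h"
  proof (intro exI conjI allI impI)
    show "0 < \<delta> / (C + 1)" using \<open>\<delta> > 0\<close> C_nonneg by simp
    fix h
    assume h: "L2 D h \<and> L2norm D h < \<delta> / (C + 1)"
    have bound: "L2norm D (ysol D k h) \<le> C * L2norm D h"
      using h L2_estimate solves_ysol by blast
    also have "\<dots> \<le> (C + 1) * L2norm D h"
      using L2norm_nonneg[of D h] by (simp add: distrib_right)
    also have "\<dots> < \<delta>"
      using h C_nonneg by (simp add: pos_less_divide_eq mult.commute)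
    finally have "\<bar>J (\<lambda>x. ysol D k u x + ysol D k h x) - J (ysol D k u) - L2inner D G (ysol D k h)\<bar>
        \<le> \<epsilon> / (C + 1) * L2norm D (ysol D k h)"
      using h by (intro \<delta> L2_ysol) simp_all
    also have "\<dots> \<le> \<epsilon> / (C + 1) * (C * L2norm D h)"
      using bound \<open>\<epsilon> / (C + 1) > 0\<close> by (intro mult_left_mono) simp_all
    also have "\<dots> \<le> \<epsilon> * L2norm D h"
      using \<open>\<epsilon> > 0\<close> C_nonneg L2norm_nonneg[of D h] by (simp add: field_simps mult_left_mono)
    moreover have "J (ysol D k (\<lambda>x. u x + h x)) = J (\<lambda>x. ysol D k u x + ysol D k h x)"
      using h u by (intro J_ae L2_ysol L2_add ysol_add_AE) simp_all
    moreover have "L2inner D (ysol D k G) h = L2inner D G (ysol D k h)"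
      using ysol_symmetric[OF G] h by (simp add: L2inner_commute)
    ultimately show "\<bar>J (ysol D k (\<lambda>x. u x + h x)) - J (ysol D k u) - L2inner D (ysol D k G) h\<bar>
        \<le> \<epsilon> * L2norm D h"
      by simp
  qed
qed

lemma reduced_gradient_AE_eq:
  assumes J_ae: "\<And>v w. L2 D v \<Longrightarrow> L2 D w \<Longrightarrow> AE x in lebesgue_on D. v x = w x \<Longrightarrow> J v = J w"
    and DJ: "\<And>v. L2 D v \<Longrightarrow> L2_gradient D J v (DJ v)"
    and u: "L2 D u" "L2_gradient D (\<lambda>v. J (ysol D k v)) u G"
  shows "AE x in lebesgue_on D. G x = ysol D k (DJ (ysol D k u)) x"
  using u(2) L2_gradient_comp_ysol[OF J_ae u(1) DJ[OF L2_ysol[OF u(1)]]]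
  by (rule L2_gradient_unique_AE)

lemma reduced_gradient_lipschitz_if_solvable:
  assumes J_ae: "\<And>v w. L2 D v \<Longrightarrow> L2 D w \<Longrightarrow> AE x in lebesgue_on D. v x = w x \<Longrightarrow> J v = J w"
    and DJ: "\<And>v. L2 D v \<Longrightarrow> L2_gradient D J v (DJ v)"
    and DJ_lipschitz: "\<And>v w. L2 D v \<Longrightarrow> L2 D w \<Longrightarrow>
      L2norm D (\<lambda>x. DJ v x - DJ w x) \<le> ell * L2norm D (\<lambda>x. v x - w x)"
    and ell: "0 \<le> ell"
    and u1: "L2 D u1" "L2_gradient D (\<lambda>v. J (ysol D k v)) u1 G1"
    and u2: "L2 D u2" "L2_gradient D (\<lambda>v. J (ysol D k v)) u2 G2"
  shows "Linfnorm D (\<lambda>x. G1 x - G2 x) \<le> ereal (ell * A\<^sup>2 * L1norm D (\<lambda>x. u1 x - u2 x))"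
proof -
  define y1 y2 where "y1 = ysol D k u1" and "y2 = ysol D k u2"
  have y: "L2 D y1" "L2 D y2"
    using u1 u2 by (simp_all add: y1_def y2_def L2_ysol)
  then have DJy: "L2 D (DJ y1)" "L2 D (DJ y2)"
    using DJ L2_gradient_L2 by blast+
  define w where "w = (\<lambda>x. DJ y1 x - DJ y2 x)"
  have w: "L2 D w"
    unfolding w_def using DJy by (rule L2_diff)
  have "AE x in lebesgue_on D. G1 x = ysol D k (DJ y1) x" "AE x in lebesgue_on D. G2 x = ysol D k (DJ y2) x"
    unfolding y1_def y2_def using J_ae DJ u1 u2 by (blast intro: reduced_gradient_AE_eq)+
  with ysol_diff_AE[OF DJy] have "AE x in lebesgue_on D. G1 x - G2 x = ysol D k w x"
    unfolding w_def by eventually_elim simp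
  then have "Linfnorm D (\<lambda>x. G1 x - G2 x) = Linfnorm D (ysol D k w)"
    using u1(2) u2(2) w
    by (intro Linfnorm_cong_AE L2_measurable L2_diff L2_ysol) (simp_all add: L2_gradient_L2 w)
  also have "\<dots> \<le> ereal (A * L2norm D w)"
    using w solves_ysol[OF w] by (rule Linf_estimate)
  also have "A * L2norm D w \<le> ell * A\<^sup>2 * L1norm D (\<lambda>x. u1 x - u2 x)"
  proof -
    have "L2norm D w \<le> ell * L2norm D (\<lambda>x. y1 x - y2 x)"
      unfolding w_def using y by (rule DJ_lipschitz)
    also have "L2norm D (\<lambda>x. y1 x - y2 x) = L2norm D (ysol D k (\<lambda>x. u1 x - u2 x))"
      using ysol_diff_AE[OF u1(1) u2(1)] y u1(1) u2(1)
      by (intro L2norm_cong_AE L2_diff L2_ysol) (auto simp: y1_def y2_def elim: eventually_mono)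
    also have "ell * \<dots> \<le> ell * (A * L1norm D (\<lambda>x. u1 x - u2 x))"
      using ell u1(1) u2(1) by (intro mult_left_mono ysol_L2norm_le_L1norm L2_diff)
    finally show ?thesis
      using A_nonneg by (simp add: mult_left_mono power2_eq_square mult_ac)
  qed
  finally show ?thesis
    by simp
qed

end

lemma (in elliptic_estimates) reduced_gradient_lipschitz:
  assumes J_ae: "\<And>v w. L2 D v \<Longrightarrow> L2 D w \<Longrightarrow> AE x in lebesgue_on D. v x = w x \<Longrightarrow> J v = J w"
    and DJ: "\<And>v. L2 D v \<Longrightarrow> L2_gradient D J v (DJ v)"
    and DJ_lipschitz: "\<And>v w. L2 D v \<Longrightarrow> L2 D w \<Longrightarrow>
      L2norm D (\<lambda>x. DJ v x - DJ w x) \<le> ell * L2norm D (\<lambda>x. v x - w x)"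
    and ell: "0 \<le> ell"
    and u1: "L2 D u1" "L2_gradient D (\<lambda>v. J (ysol D k v)) u1 G1"
    and u2: "L2 D u2" "L2_gradient D (\<lambda>v. J (ysol D k v)) u2 G2"
  shows "Linfnorm D (\<lambda>x. G1 x - G2 x) \<le> ereal (ell * A\<^sup>2 * L1norm D (\<lambda>x. u1 x - u2 x))"
proof (cases "\<forall>u. L2 D u \<longrightarrow> (\<exists>y. solves D k u y)")
  case True
  then interpret solvable_elliptic D k C A
    by unfold_locales blast
  show ?thesis
    using assms by (rule reduced_gradient_lipschitz_if_solvable)
next
  case False
  then obtain v where "L2 D v" "\<nexists>y. solves D k v y"
    by blast
  then have "AE x in lebesgue_on D. G1 x = 0" "AE x in lebesgue_on D. G2 x = 0"
    using u1 u2 by (simp_all add: reduced_gradient_eq_0_if_not_solvable)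
  then have "AE x in lebesgue_on D. G1 x - G2 x = 0"
    by eventually_elim simp
  then have "Linfnorm D (\<lambda>x. G1 x - G2 x) \<le> 0"
    using u1(2) u2(2) by (intro Linfnorm_le_0_if_AE_eq_0 L2_measurable L2_diff L2_gradient_L2)
  also have "0 \<le> ereal (ell * A\<^sup>2 * L1norm D (\<lambda>x. u1 x - u2 x))"
    using ell L1norm_nonneg[of D "\<lambda>x. u1 x - u2 x"] by simp
  finally show ?thesis .
qed

theorem lemma4p6:
  fixes D :: "'a::euclidean_space set"
    and J :: "('a \<Rightarrow> real) \<Rightarrow> real"
    and ell :: real
    and \<rho> :: "real poly"
    and lo up :: "'a \<Rightarrow> real"
    and M :: "'w measure"
    and \<xi>r :: "'w \<Rightarrow> 'b::polish_space"
    and \<kappa> :: "'b \<Rightarrow> 'a \<Rightarrow> real"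
    and \<kappa>inf \<kappa>sup CH2 CH2Linf :: real
  assumes dim: "DIM('a) \<in> {1, 2, 3}"
    and dom: "polyhedral_domain D"
    and lo_Linf: "Linf D lo" and up_Linf: "Linf D up"
    and lo_up: "AE x in lebesgue_on D. lo x \<le> 0 \<and> 0 \<le> up x"
    and prob: "prob_space M"
    and xi_meas: "\<xi>r \<in> measurable M borel"
    and J_nonneg: "\<And>v. L2 D v \<Longrightarrow> 0 \<le> J v"
    and J_ae: "\<And>v w. L2 D v \<Longrightarrow> L2 D w \<Longrightarrow> (AE x in lebesgue_on D. v x = w x) \<Longrightarrow> J v = J w"
    and J_convex: "\<And>v w t. L2 D v \<Longrightarrow> L2 D w \<Longrightarrow> 0 \<le> t \<Longrightarrow> t \<le> 1 \<Longrightarrow>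
        J (\<lambda>x. t * v x + (1 - t) * w x) \<le> t * J v + (1 - t) * J w"
    and J_grad: "\<exists>DJ. (\<forall>v. L2 D v \<longrightarrow> L2_gradient D J v (DJ v)) \<and>
        (\<forall>v w. L2 D v \<and> L2 D w \<longrightarrow> L2norm D (\<lambda>x. DJ v x - DJ w x) \<le> ell * L2norm D (\<lambda>x. v x - w x))"
    and J_growth: "mono_on {0..} (poly \<rho>)" "\<And>v. L2 D v \<Longrightarrow> J v \<le> poly \<rho> (L2norm D v)"
    and \<kappa>_C1: "\<And>\<xi>. C1cl D (\<kappa> \<xi>)"
    and \<kappa>_meas: "\<kappa> \<in> measurable borel (C1_borel D)"
    and \<kappa>_moments: "\<And>p::nat. integrable M (\<lambda>\<omega>. C1norm D (\<kappa> (\<xi>r \<omega>)) ^ p)"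
    and \<kappa>inf_pos: "\<kappa>inf > 0"
    and \<kappa>_lower: "\<And>\<xi> x. x \<in> closure D \<Longrightarrow> \<kappa> \<xi> x \<ge> \<kappa>inf"
    and CH2_pos: "CH2 > 0"
    and CH2_bound: "\<And>k u y. C1cl D k \<Longrightarrow> (\<forall>x\<in>closure D. k x > \<kappa>inf / 2) \<Longrightarrow> L2 D u \<Longrightarrow>
        solves D k u y \<Longrightarrow>
        \<exists>g h. H2wit D y g h \<and>
          H2norm_wit D y g h \<le> CH2 * C1norm D k ^ 3 / (\<kappa>inf / 2) ^ 4 * L2norm D u"
    and CH2Linf: "\<And>v g h. H2wit D v g h \<Longrightarrow> Linfnorm D v \<le> ereal (CH2Linf * H2norm_wit D v g h)"
    and \<kappa>sup_pos: "\<kappa>sup > 0"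
    and \<kappa>_upper: "\<And>\<xi>. C1norm D (\<kappa> \<xi>) \<le> \<kappa>sup"
  shows "\<forall>\<xi> u1 u2 G1 G2.
      L2 D u1 \<and> (AE x in lebesgue_on D. lo x \<le> u1 x \<and> u1 x \<le> up x) \<and>
      L2 D u2 \<and> (AE x in lebesgue_on D. lo x \<le> u2 x \<and> u2 x \<le> up x) \<and>
      L2_gradient D (gfun D J \<kappa> \<xi>) u1 G1 \<and> L2_gradient D (gfun D J \<kappa> \<xi>) u2 G2 \<longrightarrow>
      Linfnorm D (\<lambda>x. G1 x - G2 x)
        \<le> ereal (ell * (CH2Linf * (CH2 * \<kappa>sup ^ 3 / (\<kappa>inf / 2) ^ 4)) ^ 2 * L1norm D (\<lambda>x. u1 x - u2 x))"
proof (intro allI impI)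
  fix \<xi> u1 u2 G1 G2
  assume "L2 D u1 \<and> (AE x in lebesgue_on D. lo x \<le> u1 x \<and> u1 x \<le> up x) \<and>
      L2 D u2 \<and> (AE x in lebesgue_on D. lo x \<le> u2 x \<and> u2 x \<le> up x) \<and>
      L2_gradient D (gfun D J \<kappa> \<xi>) u1 G1 \<and> L2_gradient D (gfun D J \<kappa> \<xi>) u2 G2"
  then have u1: "L2 D u1" "L2_gradient D (\<lambda>v. J (ysol D (\<kappa> \<xi>) v)) u1 G1"
    and u2: "L2 D u2" "L2_gradient D (\<lambda>v. J (ysol D (\<kappa> \<xi>) v)) u2 G2"
    by (simp_all add: gfun_def[abs_def])
  have D: "open D" "bounded D" "D \<noteq> {}"
    using dom by (simp_all add: polyhedral_domain_def)
  then interpret bounded_lebesgue_set D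
    by unfold_locales (simp_all add: lmeasurable_open fmeasurableD)
  let ?C = "CH2 * \<kappa>sup ^ 3 / (\<kappa>inf / 2) ^ 4"
  interpret elliptic_estimates D "\<kappa> \<xi>" ?C "\<bar>CH2Linf\<bar> * ?C"
    using \<kappa>_C1 \<kappa>_lower \<kappa>_upper \<kappa>inf_pos CH2_pos \<kappa>sup_pos CH2_bound CH2Linf
    by (rule elliptic_estimates_if_C1_coefficient)
  obtain DJ where DJ: "\<And>v. L2 D v \<Longrightarrow> L2_gradient D J v (DJ v)"
    and DJ_lipschitz: "\<And>v w. L2 D v \<Longrightarrow> L2 D w \<Longrightarrow>
      L2norm D (\<lambda>x. DJ v x - DJ w x) \<le> ell * L2norm D (\<lambda>x. v x - w x)"
    using J_grad by blast
  have "0 \<le> ell"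
    using D(1,3) DJ_lipschitz by (rule lipschitz_constant_nonneg)
  with J_ae DJ DJ_lipschitz have "Linfnorm D (\<lambda>x. G1 x - G2 x)
      \<le> ereal (ell * (\<bar>CH2Linf\<bar> * ?C)\<^sup>2 * L1norm D (\<lambda>x. u1 x - u2 x))"
    using u1 u2 by (rule reduced_gradient_lipschitz)
  then show "Linfnorm D (\<lambda>x. G1 x - G2 x) \<le> ereal (ell * (CH2Linf * ?C) ^ 2 * L1norm D (\<lambda>x. u1 x - u2 x))"
    by (simp only: power_mult_distrib power2_abs)
qed

end
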